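(* For $n\ge0$, $\left|\Pi_n\wr C_2(1^11^1,1^11^2)\right| = \left|\mathcal{S}_{n+1}(12\!-\!3,\,214\!-\!3)\right|$.
   Context: For $n\ge0$ let $[n]=\{1,\dots,n\}$. A $2$-colored set partition of $[n]$ is a set partition of $[n]$ together with an assignment of a color from $\{1,2\}$ to each element; $\Pi_n\wr C_2$ is the set of these (with $\Pi_0\wr C_2$ containing only the empty partition). $\Pi_n\wr C_2(1^11^1,1^11^2)$ is the set of those colored partitions in which no two elements of the same block have the same color, and there are no $i<j$ in the same block with $i$ colored $1$ and $j$ colored $2$. $\mathcal{S}_{m}(12\!-\!3,214\!-\!3)$ is the set of permutations $q=q_1\cdots q_m$ of $[m]$ that contain no indices $a<a+1<b$ with $q_a<q_{a+1}<q_b$ (an occurrence of $12\!-\!3$) and no indices $a<a+1<a+2<b$ with $q_{a+1}<q_a<q_b<q_{a+2}$ (an occurrence of $214\!-\!3$). *)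

theory Defs
  imports Main "HOL-Library.Disjoint_Sets" "HOL-Library.FuncSet"
begin

definition colored_set_partitions :: "nat \<Rightarrow> (nat set set \<times> (nat \<Rightarrow> nat)) set" where
  "colored_set_partitions n =
     {(P, c). partition_on {1..n} P \<and> c \<in> {1..n} \<rightarrow>\<^sub>E {1, 2}}"

definition avoid_11_12 :: "nat \<Rightarrow> (nat set set \<times> (nat \<Rightarrow> nat)) set" where
  "avoid_11_12 n =
     {(P, c) \<in> colored_set_partitions n.
        (\<forall>B\<in>P. \<forall>i\<in>B. \<forall>j\<in>B. i \<noteq> j \<longrightarrow> c i \<noteq> c j) \<and>
        (\<not> (\<exists>B\<in>P. \<exists>i\<in>B. \<exists>j\<in>B. i < j \<and> c i = 1 \<and> c j = 2))}"

(* permutations q = q_1 ... q_m of [m], as lists (list index k = position k+1) *)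
definition perms_of :: "nat \<Rightarrow> nat list set" where
  "perms_of m = {q. distinct q \<and> set q = {1..m}}"

definition contains_12_3 :: "nat list \<Rightarrow> bool" where
  "contains_12_3 q = (\<exists>a b. a + 1 < b \<and> b < length q \<and>
       q ! a < q ! (a + 1) \<and> q ! (a + 1) < q ! b)"

definition contains_214_3 :: "nat list \<Rightarrow> bool" where
  "contains_214_3 q = (\<exists>a b. a + 2 < b \<and> b < length q \<and>
       q ! (a + 1) < q ! a \<and> q ! a < q ! b \<and> q ! b < q ! (a + 2))"

definition S_12_3_214_3 :: "nat \<Rightarrow> nat list set" where
  "S_12_3_214_3 m = {q \<in> perms_of m. \<not> contains_12_3 q \<and> \<not> contains_214_3 q}"

end

theory Submission
  imports Defs
begin

text \<open>
  Within a block of a colored partition in the avoiding class, a smaller element has color 2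
  and a larger one color 1, so blocks have at most two elements and a pair \<open>{i < j}\<close> is
  colored 2, 1. Removing the block of the largest element n gives
  \<open>a(n) = 2 a(n-1) + (n-1) a(n-2)\<close>. On the other side, a permutation avoiding 12-3 and 214-3
  starts with its largest entry, with its second largest entry, or with some other entry
  immediately followed by the largest one, and conversely each of these shapes avoids both
  patterns as long as the rest does. This gives \<open>b(m) = 2 b(m-1) + (m-2) b(m-2)\<close>, so
  \<open>a(n) = b(n+1)\<close>.
\<close>

lemma obtain_two_greatest:
  fixes A :: "'a::linorder set"
  assumes "finite A" "2 \<le> card A"
  obtains M M' where "M \<in> A" "M' \<in> A" "M' < M" "\<forall>w\<in>A - {M}. w \<le> M'"
proof -
  define M where "M = Max A"
  have "A \<noteq> {}" using assms(2) by auto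
  then have M: "M \<in> A" "\<forall>w\<in>A. w \<le> M" using assms(1) by (simp_all add: M_def)
  have "card (A - {M}) \<noteq> 0" using M(1) assms by simp
  then have ne: "A - {M} \<noteq> {}" by (metis card.empty)
  define M' where "M' = Max (A - {M})"
  have M': "M' \<in> A - {M}" "\<forall>w\<in>A - {M}. w \<le> M'"
    using assms(1) ne Max_in[of "A - {M}"] by (simp_all add: M'_def)
  have "M' < M" using M M' by (simp add: order.not_eq_order_implies_strict)
  with M M' show thesis using that by blast
qed

lemma card_UN_disjoint_const:
  assumes "finite K" "\<And>k. k \<in> K \<Longrightarrow> finite (X k)" "\<And>k. k \<in> K \<Longrightarrow> card (X k) = c"
    "\<And>i j. i \<in> K \<Longrightarrow> j \<in> K \<Longrightarrow> i \<noteq> j \<Longrightarrow> X i \<inter> X j = {}"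
  shows "card (\<Union>k\<in>K. X k) = card K * c"
  using assms by (simp add: card_UN_disjoint)

text \<open>\<open>avoider_number (n + 1)\<close> is OEIS A005425: involutions of [n] with 2-colored fixed points.\<close>

fun avoider_number :: "nat \<Rightarrow> nat" where
  "avoider_number 0 = 1"
| "avoider_number (Suc 0) = 1"
| "avoider_number (Suc (Suc n)) = 2 * avoider_number (Suc n) + n * avoider_number n"

section \<open>Permutations avoiding 12-3 and 214-3\<close>

lemma contains_12_3_Cons:
  "contains_12_3 (x # r) \<longleftrightarrow> contains_12_3 r \<or>
     (case r of [] \<Rightarrow> False | y # s \<Rightarrow> x < y \<and> (\<exists>w\<in>set s. y < w))"
proof
  assume "contains_12_3 (x # r)"
  then obtain a b where h: "a + 1 < b" "b < length (x # r)"
    "(x # r) ! a < (x # r) ! (a + 1)" "(x # r) ! (a + 1) < (x # r) ! b"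
    unfolding contains_12_3_def by blast
  show "contains_12_3 r \<or> (case r of [] \<Rightarrow> False | y # s \<Rightarrow> x < y \<and> (\<exists>w\<in>set s. y < w))"
  proof (cases a)
    case 0
    then obtain y s where r: "r = y # s" using h by (cases r) auto
    have "s ! (b - 2) \<in> set s" "s ! (b - 2) = (x # r) ! b"
      using h r 0 by (auto simp: nth_Cons' numeral_2_eq_2)
    then show ?thesis using h r 0 by auto
  next
    case (Suc a')
    then have "contains_12_3 r" using h unfolding contains_12_3_def
      by (intro exI[of _ a'] exI[of _ "b - 1"]) (cases b; auto)
    then show ?thesis by simp
  qed
next
  assume "contains_12_3 r \<or> (case r of [] \<Rightarrow> False | y # s \<Rightarrow> x < y \<and> (\<exists>w\<in>set s. y < w))"
  then show "contains_12_3 (x # r)"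
  proof
    assume "contains_12_3 r"
    then obtain a b where "a + 1 < b" "b < length r" "r ! a < r ! (a + 1)" "r ! (a + 1) < r ! b"
      unfolding contains_12_3_def by blast
    then show ?thesis unfolding contains_12_3_def
      by (intro exI[of _ "Suc a"] exI[of _ "Suc b"]) auto
  next
    assume "case r of [] \<Rightarrow> False | y # s \<Rightarrow> x < y \<and> (\<exists>w\<in>set s. y < w)"
    then obtain y s i where "r = y # s" "x < y" "i < length s" "y < s ! i"
      by (cases r) (auto simp: in_set_conv_nth)
    then show ?thesis unfolding contains_12_3_def
      by (intro exI[of _ 0] exI[of _ "i + 2"]) auto
  qed
qed

lemma contains_214_3_Cons:
  "contains_214_3 (x # r) \<longleftrightarrow> contains_214_3 r \<or>
     (case r of y # z # s \<Rightarrow> y < x \<and> (\<exists>w\<in>set s. x < w \<and> w < z) | _ \<Rightarrow> False)"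
proof
  assume "contains_214_3 (x # r)"
  then obtain a b where h: "a + 2 < b" "b < length (x # r)" "(x # r) ! (a + 1) < (x # r) ! a"
    "(x # r) ! a < (x # r) ! b" "(x # r) ! b < (x # r) ! (a + 2)"
    unfolding contains_214_3_def by blast
  show "contains_214_3 r \<or> (case r of y # z # s \<Rightarrow> y < x \<and> (\<exists>w\<in>set s. x < w \<and> w < z) | _ \<Rightarrow> False)"
  proof (cases a)
    case 0
    then obtain y z s where r: "r = y # z # s" using h by (cases r; cases "tl r") auto
    have "s ! (b - 3) \<in> set s" "s ! (b - 3) = (x # r) ! b"
      using h r 0 by (auto simp: nth_Cons' numeral_3_eq_3)
    then show ?thesis using h r 0 by auto
  next
    case (Suc a')
    then have "contains_214_3 r" using h unfolding contains_214_3_def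
      by (intro exI[of _ a'] exI[of _ "b - 1"]) (cases b; auto)
    then show ?thesis by simp
  qed
next
  assume "contains_214_3 r \<or> (case r of y # z # s \<Rightarrow> y < x \<and> (\<exists>w\<in>set s. x < w \<and> w < z) | _ \<Rightarrow> False)"
  then show "contains_214_3 (x # r)"
  proof
    assume "contains_214_3 r"
    then obtain a b where "a + 2 < b" "b < length r" "r ! (a + 1) < r ! a" "r ! a < r ! b"
      "r ! b < r ! (a + 2)"
      unfolding contains_214_3_def by blast
    then show ?thesis unfolding contains_214_3_def
      by (intro exI[of _ "Suc a"] exI[of _ "Suc b"]) auto
  next
    assume "case r of y # z # s \<Rightarrow> y < x \<and> (\<exists>w\<in>set s. x < w \<and> w < z) | _ \<Rightarrow> False"
    then obtain y z s i where "r = y # z # s" "y < x" "i < length s" "x < s ! i" "s ! i < z"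
      by (auto split: list.splits simp: in_set_conv_nth)
    then show ?thesis unfolding contains_214_3_def
      by (intro exI[of _ 0] exI[of _ "i + 3"]) auto
  qed
qed

definition avoids_12_3_214_3 :: "nat list \<Rightarrow> bool" where
  "avoids_12_3_214_3 q \<longleftrightarrow> \<not> contains_12_3 q \<and> \<not> contains_214_3 q"

lemma avoids_Nil: "avoids_12_3_214_3 []"
  unfolding avoids_12_3_214_3_def contains_12_3_def contains_214_3_def by auto

lemma avoids_ConsD: "avoids_12_3_214_3 (x # r) \<Longrightarrow> avoids_12_3_214_3 r"
  unfolding avoids_12_3_214_3_def contains_12_3_Cons contains_214_3_Cons by blast

lemma avoids_Cons_greatest:
  "avoids_12_3_214_3 r \<Longrightarrow> \<forall>w\<in>set r. w < x \<Longrightarrow> avoids_12_3_214_3 (x # r)"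
  unfolding avoids_12_3_214_3_def contains_12_3_Cons contains_214_3_Cons
  by (auto split: list.splits)

lemma avoids_Cons_second_greatest:
  assumes "avoids_12_3_214_3 r" and "\<forall>w\<in>set r. w < x \<or> w = M" and "\<forall>w\<in>set r. w \<le> M"
  shows "avoids_12_3_214_3 (x # r)"
  using assms unfolding avoids_12_3_214_3_def contains_12_3_Cons contains_214_3_Cons
  by (fastforce split: list.splits)

lemma avoids_Cons_Cons_greatest:
  "avoids_12_3_214_3 s \<Longrightarrow> \<forall>w\<in>set s. w < M \<Longrightarrow> k < M \<Longrightarrow> avoids_12_3_214_3 (k # M # s)"
  using avoids_Cons_greatest[of s M]
  unfolding avoids_12_3_214_3_def contains_12_3_Cons[of k] contains_214_3_Cons[of k]
  by (auto split: list.splits) (meson less_asym)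

lemma avoids_ascent_before_two_larger:
  assumes "avoids_12_3_214_3 (x # r)" "distinct (x # r)" "a \<in> set r" "b \<in> set r" "a \<noteq> b"
    "x < a" "x < b"
  shows "\<exists>y s. r = y # s \<and> x < y"
  using assms
proof (induction r arbitrary: x)
  case Nil
  then show ?case by simp
next
  case (Cons y r')
  show ?case
  proof (cases "x < y")
    case True
    then show ?thesis by blast
  next
    case False
    txt \<open>By induction y is followed by a larger z, which exceeds all later entries (no 12-3);
      one of a, b comes after z and completes the 214-3 \<open>x y z w\<close>.\<close>
    with Cons.prems have yx: "y < x" by auto
    have ab: "a \<in> set r'" "b \<in> set r'" using Cons.prems yx by auto
    have av: "avoids_12_3_214_3 (y # r')" using Cons.prems(1) by (rule avoids_ConsD)
    obtain z s where r': "r' = z # s" "y < z"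
      using Cons.IH[OF av] Cons.prems ab yx by auto
    have "\<not> (\<exists>w\<in>set s. z < w)"
      using av r' unfolding avoids_12_3_214_3_def contains_12_3_Cons by auto
    moreover obtain w where w: "w \<in> set s" "x < w" "w \<noteq> z"
      using ab r' Cons.prems by auto
    ultimately have "w < z" by auto
    then have "contains_214_3 (x # y # z # s)"
      unfolding contains_214_3_Cons[of x] using yx w by auto
    then show ?thesis using Cons.prems(1) r' unfolding avoids_12_3_214_3_def by simp
  qed
qed

lemma avoids_second_entry_greatest:
  assumes "avoids_12_3_214_3 (x # r)" "distinct (x # r)" "M \<in> set r" "\<forall>w\<in>set r. w \<le> M"
    "b \<in> set r" "b \<noteq> M" "x < b"
  shows "\<exists>s. r = M # s"
proof -
  have "x < M" using assms(4-7) by fastforce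
  then obtain y s where r: "r = y # s" "x < y"
    using avoids_ascent_before_two_larger[OF assms(1-3,5)] assms(6,7) by blast
  have "y = M"
  proof (rule ccontr)
    assume "y \<noteq> M"
    then have "M \<in> set s" "y < M" using assms(3,4) r by (auto simp: order.order_iff_strict)
    then have "contains_12_3 (x # r)" unfolding contains_12_3_Cons using r by auto
    then show False using assms(1) unfolding avoids_12_3_214_3_def by simp
  qed
  then show ?thesis using r by blast
qed

definition avoiders :: "nat set \<Rightarrow> nat list set" where
  "avoiders A = {q. distinct q \<and> set q = A \<and> avoids_12_3_214_3 q}"

lemma S_12_3_214_3_eq_avoiders: "S_12_3_214_3 m = avoiders {1..m}"
  unfolding S_12_3_214_3_def perms_of_def avoiders_def avoids_12_3_214_3_def by auto

lemma finite_avoiders: "finite A \<Longrightarrow> finite (avoiders A)"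
  by (rule finite_subset[OF _ finite_subset_distinct[of A]]) (auto simp: avoiders_def)

lemma avoiders_empty: "avoiders {} = {[]}"
  by (auto simp: avoiders_def avoids_Nil)

lemma avoiders_singleton: "avoiders {a} = {[a]}"
proof -
  have "q = [a]" if "distinct q" "set q = {a}" for q
  proof -
    have "length q = 1" using that distinct_card by fastforce
    with that show ?thesis by (cases q) auto
  qed
  then show ?thesis using avoids_Cons_greatest[OF avoids_Nil, of a]
    unfolding avoiders_def by auto
qed

lemma avoiders_subset_decomposition:
  assumes "M \<in> A" "M' \<in> A" "M' < M" "\<forall>w\<in>A - {M}. w \<le> M'"
  shows "avoiders A \<subseteq> Cons M ` avoiders (A - {M}) \<union> Cons M' ` avoiders (A - {M'})
    \<union> (\<Union>k\<in>A - {M, M'}. (\<lambda>s. k # M # s) ` avoiders (A - {k, M}))"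
proof
  fix q assume "q \<in> avoiders A"
  then have q: "distinct q" "set q = A" "avoids_12_3_214_3 q" by (auto simp: avoiders_def)
  then obtain h r where qr: "q = h # r" using assms(1) by (cases q) auto
  have r: "set r = A - {h}" "distinct r" "avoids_12_3_214_3 r"
    using q qr avoids_ConsD by auto
  consider "h = M" | "h = M'" | "h \<in> A - {M, M'}" using q qr by auto
  then show "q \<in> Cons M ` avoiders (A - {M}) \<union> Cons M' ` avoiders (A - {M'})
    \<union> (\<Union>k\<in>A - {M, M'}. (\<lambda>s. k # M # s) ` avoiders (A - {k, M}))"
  proof cases
    case 3
    have "w \<le> M" if "w \<in> set r" for w
    proof (cases "w = M")
      case False
      then have "w \<le> M'" using assms(4) r(1) that by blast
      then show ?thesis using assms(3) by simp
    qed simp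
    then have "\<forall>w\<in>set r. w \<le> M" by blast
    moreover have "M \<in> set r" "M' \<in> set r" using r(1) assms(1,2) 3 by auto
    moreover have "h < M'" using assms(4) 3 order.not_eq_order_implies_strict by blast
    ultimately obtain s where "r = M # s"
      using avoids_second_entry_greatest[of h r M M'] q qr assms(3) by blast
    then have "q \<in> (\<lambda>s. h # M # s) ` avoiders (A - {h, M})"
      using qr r avoids_ConsD by (auto simp: avoiders_def)
    then show ?thesis using 3 by blast
  qed (use qr r in \<open>auto simp: avoiders_def\<close>)
qed

lemma avoiders_decompose:
  assumes "M \<in> A" "M' \<in> A" "M' < M" "\<forall>w\<in>A - {M}. w \<le> M'"
  shows "avoiders A = Cons M ` avoiders (A - {M}) \<union> Cons M' ` avoiders (A - {M'})
    \<union> (\<Union>k\<in>A - {M, M'}. (\<lambda>s. k # M # s) ` avoiders (A - {k, M}))"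
proof
  have lt_M: "w < M" if "w \<in> A - {M}" for w using assms(3,4) that le_less_trans by blast
  have le_M: "w \<le> M" if "w \<in> A" for w using lt_M[of w] that by (cases "w = M") auto
  have lt_M': "w < M'" if "w \<in> A - {M, M'}" for w
    using assms(4) that order.not_eq_order_implies_strict by blast
  show "Cons M ` avoiders (A - {M}) \<union> Cons M' ` avoiders (A - {M'})
    \<union> (\<Union>k\<in>A - {M, M'}. (\<lambda>s. k # M # s) ` avoiders (A - {k, M})) \<subseteq> avoiders A"
  proof
    fix q assume "q \<in> Cons M ` avoiders (A - {M}) \<union> Cons M' ` avoiders (A - {M'})
      \<union> (\<Union>k\<in>A - {M, M'}. (\<lambda>s. k # M # s) ` avoiders (A - {k, M}))"
    then consider r where "q = M # r" "r \<in> avoiders (A - {M})"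
      | r where "q = M' # r" "r \<in> avoiders (A - {M'})"
      | k s where "k \<in> A - {M, M'}" "q = k # M # s" "s \<in> avoiders (A - {k, M})"
      by blast
    then show "q \<in> avoiders A"
    proof cases
      case 1
      then have "avoids_12_3_214_3 (M # r)" using avoids_Cons_greatest lt_M
        by (simp add: avoiders_def)
      with 1 show ?thesis using assms(1) by (auto simp: avoiders_def)
    next
      case 2
      then have "\<forall>w\<in>set r. w < M' \<or> w = M" "\<forall>w\<in>set r. w \<le> M"
        using le_M lt_M' by (auto simp: avoiders_def)
      then have "avoids_12_3_214_3 (M' # r)" using avoids_Cons_second_greatest 2(2)
        by (simp add: avoiders_def)
      with 2 show ?thesis using assms(2) by (auto simp: avoiders_def)
    next
      case 3
      then have "avoids_12_3_214_3 (k # M # s)" using avoids_Cons_Cons_greatest[of s M k] lt_M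
        by (force simp: avoiders_def)
      with 3 show ?thesis using assms(1) by (auto simp: avoiders_def)
    qed
  qed
qed (rule avoiders_subset_decomposition[OF assms])

lemma card_avoiders_decompose:
  assumes "finite A" "M \<in> A" "M' \<in> A" "M' < M" "\<forall>w\<in>A - {M}. w \<le> M'"
    and "\<forall>k\<in>A - {M, M'}. card (avoiders (A - {k, M})) = c"
  shows "card (avoiders A) =
    card (avoiders (A - {M})) + card (avoiders (A - {M'})) + card (A - {M, M'}) * c"
proof -
  let ?X1 = "Cons M ` avoiders (A - {M})"
  let ?X2 = "Cons M' ` avoiders (A - {M'})"
  let ?Y = "\<lambda>k. (\<lambda>s. k # M # s) ` avoiders (A - {k, M})"
  have "card (\<Union>k\<in>A - {M, M'}. ?Y k) = card (A - {M, M'}) * c"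
    using assms(1,6) by (subst card_UN_disjoint_const) (auto simp: finite_avoiders card_image inj_on_def)
  moreover have "finite ?X1" "finite ?X2" "finite (\<Union>k\<in>A - {M, M'}. ?Y k)"
    using assms(1) by (simp_all add: finite_avoiders)
  moreover have "?X1 \<inter> ?X2 = {}" "(?X1 \<union> ?X2) \<inter> (\<Union>k\<in>A - {M, M'}. ?Y k) = {}"
    using assms(4) by auto
  ultimately show ?thesis
    unfolding avoiders_decompose[OF assms(2-5)] by (simp add: card_Un_disjoint card_image)
qed

lemma card_avoiders: "finite A \<Longrightarrow> card (avoiders A) = avoider_number (card A)"
proof (induction "card A" arbitrary: A rule: less_induct)
  case less
  consider "card A = 0" | "card A = 1" | n where "card A = Suc (Suc n)"
    by (metis One_nat_def not0_implies_Suc)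
  then show ?case
  proof cases
    case 1
    then show ?thesis using less.prems by (simp add: avoiders_empty)
  next
    case 2
    then show ?thesis by (auto simp: card_1_singleton_iff avoiders_singleton)
  next
    case (3 n)
    with less.prems obtain M M' where MM': "M \<in> A" "M' \<in> A" "M' < M" "\<forall>w\<in>A - {M}. w \<le> M'"
      using obtain_two_greatest by (metis le_add1 add_2_eq_Suc)
    have IH: "card (avoiders B) = avoider_number (card B)" if "B \<subseteq> A" "B \<noteq> A" for B
      using less.hyps less.prems that by (meson finite_subset psubsetI psubset_card_mono)
    have "\<forall>k\<in>A - {M, M'}. card (avoiders (A - {k, M})) = avoider_number n"
    proof
      fix k assume k: "k \<in> A - {M, M'}"
      then have "card (A - {k, M}) = n" using MM' 3 less.prems by (simp add: card_Diff_subset)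
      then show "card (avoiders (A - {k, M})) = avoider_number n" using IH[of "A - {k, M}"] k MM'(1) by auto
    qed
    then have "card (avoiders A) = card (avoiders (A - {M})) + card (avoiders (A - {M'}))
        + card (A - {M, M'}) * avoider_number n"
      by (rule card_avoiders_decompose[OF less.prems MM'])
    also have "\<dots> = 2 * avoider_number (Suc n) + n * avoider_number n"
    proof -
      have "A - {M} \<noteq> A" "A - {M'} \<noteq> A" using MM'(1,2) by auto
      moreover have "card (A - {M, M'}) = n" using MM' 3 less.prems by (simp add: card_Diff_subset)
      ultimately show ?thesis using IH[of "A - {M}"] IH[of "A - {M'}"] MM'(1,2) 3 less.prems by simp
    qed
    finally show ?thesis using 3 by simp
  qed
qed

section \<open>Colored partitions avoiding \<open>1\<^sup>11\<^sup>1\<close> and \<open>1\<^sup>11\<^sup>2\<close>\<close>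

type_synonym colored_partition = "nat set set \<times> (nat \<Rightarrow> nat)"

definition avoiding_partitions :: "nat set \<Rightarrow> colored_partition set" where
  "avoiding_partitions A = {(P, c). partition_on A P \<and> c \<in> A \<rightarrow>\<^sub>E {1, 2} \<and>
     (\<forall>B\<in>P. \<forall>i\<in>B. \<forall>j\<in>B. i < j \<longrightarrow> c i = 2 \<and> c j = 1)}"

lemma two_coloring_conditions_iff:
  fixes c :: "nat \<Rightarrow> nat"
  assumes "\<forall>B\<in>P. \<forall>i\<in>B. c i = 1 \<or> c i = 2"
  shows "(\<forall>B\<in>P. \<forall>i\<in>B. \<forall>j\<in>B. i \<noteq> j \<longrightarrow> c i \<noteq> c j) \<and>
      \<not> (\<exists>B\<in>P. \<exists>i\<in>B. \<exists>j\<in>B. i < j \<and> c i = 1 \<and> c j = 2)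
    \<longleftrightarrow> (\<forall>B\<in>P. \<forall>i\<in>B. \<forall>j\<in>B. i < j \<longrightarrow> c i = 2 \<and> c j = 1)" (is "?L \<longleftrightarrow> ?R")
proof
  assume ?R
  then have "c i \<noteq> c j" if "B \<in> P" "i \<in> B" "j \<in> B" "i \<noteq> j" for B i j
    using that by (cases i j rule: linorder_cases) auto
  with \<open>?R\<close> show ?L by fastforce
next
  assume ?L
  then have "c i = 2 \<and> c j = 1" if "B \<in> P" "i \<in> B" "j \<in> B" "i < j" for B i j
    using that assms by (metis less_irrefl)
  then show ?R by blast
qed

lemma avoid_11_12_eq: "avoid_11_12 n = avoiding_partitions {1..n}"
proof (rule set_eqI, clarify)
  fix P :: "nat set set" and c :: "nat \<Rightarrow> nat"
  show "(P, c) \<in> avoid_11_12 n \<longleftrightarrow> (P, c) \<in> avoiding_partitions {1..n}"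
  proof (cases "partition_on {1..n} P \<and> c \<in> {1..n} \<rightarrow>\<^sub>E {1, 2}")
    case True
    have "\<forall>B\<in>P. \<forall>i\<in>B. c i = 1 \<or> c i = 2"
    proof (intro ballI)
      fix B i assume "B \<in> P" "i \<in> B"
      then have "i \<in> {1..n}" using True partition_onD1 by blast
      then show "c i = 1 \<or> c i = 2" using True PiE_mem by fastforce
    qed
    with True show ?thesis
      unfolding avoid_11_12_def colored_set_partitions_def avoiding_partitions_def
      using two_coloring_conditions_iff by (simp only: mem_Collect_eq case_prod_conv simp_thms)
  qed (auto simp: avoid_11_12_def colored_set_partitions_def avoiding_partitions_def)
qed

lemma avoiding_partitionsD:
  assumes "(P, c) \<in> avoiding_partitions A"
  shows "partition_on A P" "c \<in> A \<rightarrow>\<^sub>E {1, 2}"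
    "\<And>B i j. B \<in> P \<Longrightarrow> i \<in> B \<Longrightarrow> j \<in> B \<Longrightarrow> i < j \<Longrightarrow> c i = 2 \<and> c j = 1"
  using assms unfolding avoiding_partitions_def by blast+

lemma finite_avoiding_partitions: "finite A \<Longrightarrow> finite (avoiding_partitions A)"
  by (rule finite_subset[of _ "Pow (Pow A) \<times> (A \<rightarrow>\<^sub>E {1, 2})"])
    (auto simp: avoiding_partitions_def partition_on_def finite_PiE)

lemma avoiding_partitions_empty: "avoiding_partitions {} = {({}, \<lambda>_. undefined)}"
  by (auto simp: avoiding_partitions_def partition_on_empty)

lemma avoiding_partitions_no_three_in_block:
  assumes "(P, c) \<in> avoiding_partitions A" "B \<in> P" "i \<in> B" "j \<in> B" "k \<in> B" "i < j" "j < k"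
  shows False
proof -
  have "c j = 1" "c j = 2" using avoiding_partitionsD(3)[OF assms(1,2)] assms(3-7) by blast+
  then show False by simp
qed

lemma avoiding_partitions_insert_block:
  assumes "(P, c) \<in> avoiding_partitions A" "B \<noteq> {}" "B \<inter> A = {}"
    "c' \<in> A \<union> B \<rightarrow>\<^sub>E {1, 2}" "\<forall>x\<in>A. c' x = c x"
    "\<forall>i\<in>B. \<forall>j\<in>B. i < j \<longrightarrow> c' i = 2 \<and> c' j = 1"
  shows "(insert B P, c') \<in> avoiding_partitions (A \<union> B)"
proof -
  note P = avoiding_partitionsD[OF assms(1)]
  have "disjnt B (\<Union>P)" "A \<union> B - B = A"
    using partition_onD1[OF P(1)] assms(3) by (auto simp: disjnt_def)
  then have "partition_on (A \<union> B) (insert B P)"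
    using partition_on_insert P(1) assms(2) by fastforce
  moreover have "c' i = 2 \<and> c' j = 1" if "B' \<in> P" "i \<in> B'" "j \<in> B'" "i < j" for B' i j
    using P(1) P(3)[OF that] that assms(5) by (metis partition_onD1 UnionI)
  ultimately show ?thesis using assms(4,6) unfolding avoiding_partitions_def by blast
qed

lemma avoiding_partitions_remove_block:
  assumes "(P, c) \<in> avoiding_partitions A" "B \<in> P"
  shows "(P - {B}, restrict c (A - B)) \<in> avoiding_partitions (A - B)"
proof -
  note P = avoiding_partitionsD[OF assms(1)]
  have "disjnt B (\<Union>(P - {B}))"
    using partition_onD2[OF P(1)] assms(2) by (auto simp: disjnt_def disjoint_def)
  moreover have "insert B (P - {B}) = P" using assms(2) by blast
  ultimately have "partition_on (A - B) (P - {B})"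
    using partition_on_insert[of B "P - {B}" A] P(1) by simp
  moreover have "restrict c (A - B) \<in> A - B \<rightarrow>\<^sub>E {1, 2}" using P(2) by auto
  moreover have "B' \<subseteq> A - B" if "B' \<in> P - {B}" for B'
    using that assms(2) P(1) by (auto simp: partition_on_def disjoint_def)
  ultimately show ?thesis using P(3) unfolding avoiding_partitions_def by fastforce
qed

lemma avoiding_partitions_insert_block_cancel:
  assumes "(P, c) \<in> avoiding_partitions A" "B \<noteq> {}" "B \<inter> A = {}" "\<forall>x\<in>A. c' x = c x"
  shows "(insert B P - {B}, restrict c' A) = (P, c)"
proof -
  note P = avoiding_partitionsD[OF assms(1)]
  have "B \<notin> P" using P(1) assms(2,3) by (auto simp: partition_on_def)
  moreover have "restrict c' A = c" using P(2) assms(4) by (auto simp: PiE_def extensional_def)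
  ultimately show ?thesis by simp
qed

lemma avoiding_partitions_block_of_greatest:
  assumes "(P, c) \<in> avoiding_partitions A" "B \<in> P" "M \<in> B" "\<forall>a\<in>A. a \<le> M"
  shows "B = {M} \<or> (\<exists>k. k < M \<and> B = {k, M})"
proof (cases "B = {M}")
  case False
  note P = avoiding_partitionsD[OF assms(1)]
  have below: "x < M" if "x \<in> B" "x \<noteq> M" for x
    using that assms(2,4) partition_onD1[OF P(1)] by (metis UnionI order.not_eq_order_implies_strict)
  obtain k where k: "k \<in> B" "k \<noteq> M" using False assms(3) by blast
  have "j = k" if "j \<in> B" "j \<noteq> M" for j
  proof (rule ccontr)
    assume "j \<noteq> k"
    then consider "j < k" | "k < j" by linarith
    then show False
      using avoiding_partitions_no_three_in_block[OF assms(1,2)] that k assms(3) below by metis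
  qed
  then have "B = {k, M}" using k assms(3) by blast
  then show ?thesis using below k by blast
qed simp

definition add_singleton :: "nat \<Rightarrow> nat \<Rightarrow> colored_partition \<Rightarrow> colored_partition" where
  "add_singleton M v = (\<lambda>(P, c). (insert {M} P, c(M := v)))"

definition add_pair :: "nat \<Rightarrow> nat \<Rightarrow> colored_partition \<Rightarrow> colored_partition" where
  "add_pair k M = (\<lambda>(P, c). (insert {k, M} P, c(k := 2, M := 1)))"

lemma add_singleton_mem:
  assumes "x \<in> avoiding_partitions A" "M \<notin> A" "v \<in> {1, 2}"
  shows "add_singleton M v x \<in> avoiding_partitions (insert M A)"
proof -
  obtain P c where x: "x = (P, c)" by (cases x)
  have "c(M := v) \<in> A \<union> {M} \<rightarrow>\<^sub>E {1, 2}"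
    using PiE_fun_upd[OF assms(3) avoiding_partitionsD(2)] assms(1) x by simp
  then show ?thesis using avoiding_partitions_insert_block[of P c A "{M}"] assms x
    by (simp add: add_singleton_def)
qed

lemma add_pair_mem:
  assumes "x \<in> avoiding_partitions A" "k \<notin> A" "M \<notin> A" "k < M"
  shows "add_pair k M x \<in> avoiding_partitions (A \<union> {k, M})"
proof -
  obtain P c where x: "x = (P, c)" by (cases x)
  have "c(k := 2) \<in> insert k A \<rightarrow>\<^sub>E {1, 2}"
    using PiE_fun_upd avoiding_partitionsD(2) assms(1) x by fastforce
  then have "c(k := 2, M := 1) \<in> A \<union> {k, M} \<rightarrow>\<^sub>E {1, 2}"
    using PiE_fun_upd[of 1 "\<lambda>_. {1, 2}" M "c(k := 2)"] by (simp add: insert_commute)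
  moreover have "\<forall>y\<in>A. (c(k := 2, M := 1)) y = c y" using assms(2,3) by auto
  moreover have "\<forall>i\<in>{k, M}. \<forall>j\<in>{k, M}. i < j \<longrightarrow> (c(k := 2, M := 1)) i = 2 \<and> (c(k := 2, M := 1)) j = 1"
    using assms(4) by auto
  ultimately show ?thesis using avoiding_partitions_insert_block[of P c A "{k, M}"] assms x
    by (simp add: add_pair_def)
qed

lemma inj_on_add_singleton:
  assumes "M \<notin> A"
  shows "inj_on (add_singleton M v) (avoiding_partitions A)"
proof (rule inj_on_inverseI)
  fix x assume "x \<in> avoiding_partitions A"
  moreover obtain P c where "x = (P, c)" by (cases x)
  ultimately show "(\<lambda>(P, c). (P - {{M}}, restrict c A)) (add_singleton M v x) = x"
    using avoiding_partitions_insert_block_cancel[of P c A "{M}" "c(M := v)"] assms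
    by (simp add: add_singleton_def)
qed

lemma inj_on_add_pair:
  assumes "k \<notin> A" "M \<notin> A"
  shows "inj_on (add_pair k M) (avoiding_partitions A)"
proof (rule inj_on_inverseI)
  fix x assume "x \<in> avoiding_partitions A"
  moreover obtain P c where "x = (P, c)" by (cases x)
  moreover have "\<forall>y\<in>A. (c(k := 2, M := 1)) y = c y" using assms by auto
  ultimately show "(\<lambda>(P, c). (P - {{k, M}}, restrict c A)) (add_pair k M x) = x"
    using avoiding_partitions_insert_block_cancel[of P c A "{k, M}" "c(k := 2, M := 1)"] assms
    by (simp add: add_pair_def)
qed

lemma add_pair_block_containing:
  assumes "x \<in> avoiding_partitions A" "M \<notin> A" "B \<in> fst (add_pair k M x)" "M \<in> B"
  shows "B = {k, M}"
proof -
  obtain P c where x: "x = (P, c)" by (cases x)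
  have "M \<notin> \<Union>P" using avoiding_partitionsD(1)[OF assms(1)[unfolded x]] assms(2)
    by (simp add: partition_onD1[symmetric])
  then show ?thesis using assms(3,4) by (auto simp: add_pair_def x)
qed

lemma add_singleton_images_disjoint:
  "v \<noteq> w \<Longrightarrow> add_singleton M v ` X \<inter> add_singleton M w ` Y = {}"
  by (fastforce simp: add_singleton_def dest: fun_cong[where x = M])

lemma add_pair_images_disjoint:
  assumes "M \<notin> B" "i \<noteq> j" "i \<noteq> M"
  shows "add_pair i M ` X \<inter> add_pair j M ` avoiding_partitions B = {}"
proof -
  have "y \<notin> add_pair j M ` avoiding_partitions B" if "y \<in> add_pair i M ` X" for y
  proof
    assume "y \<in> add_pair j M ` avoiding_partitions B"
    then obtain z where "z \<in> avoiding_partitions B" "y = add_pair j M z" by blast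
    moreover have "{i, M} \<in> fst y" using that by (auto simp: add_pair_def)
    ultimately have "{i, M} = {j, M}" using add_pair_block_containing assms(1) by blast
    then show False using assms(2,3) by (auto simp: doubleton_eq_iff)
  qed
  then show ?thesis by blast
qed

lemma add_singleton_add_pair_images_disjoint:
  assumes "M \<notin> B" "k \<noteq> M"
  shows "add_singleton M v ` X \<inter> add_pair k M ` avoiding_partitions B = {}"
proof -
  have "y \<notin> add_pair k M ` avoiding_partitions B" if "y \<in> add_singleton M v ` X" for y
  proof
    assume "y \<in> add_pair k M ` avoiding_partitions B"
    then obtain z where "z \<in> avoiding_partitions B" "y = add_pair k M z" by blast
    moreover have "{M} \<in> fst y" using that by (auto simp: add_singleton_def)
    ultimately have "{M} = {k, M}" using add_pair_block_containing assms(1) by blast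
    then show False using assms(2) by auto
  qed
  then show ?thesis by blast
qed

lemma avoiding_partitions_insert_greatest_subset:
  assumes "M \<notin> A" "\<forall>a\<in>A. a < M"
  shows "avoiding_partitions (insert M A) \<subseteq>
    (\<Union>v\<in>{1, 2}. add_singleton M v ` avoiding_partitions A)
    \<union> (\<Union>k\<in>A. add_pair k M ` avoiding_partitions (A - {k}))"
proof
  fix x assume x: "x \<in> avoiding_partitions (insert M A)"
  obtain P c where x_eq: "x = (P, c)" by (cases x)
  note P = avoiding_partitionsD[OF x[unfolded x_eq]]
  have c_outside: "c y = undefined" if "y \<notin> insert M A" for y
    using P(2) that by (auto simp: PiE_def extensional_def)
  obtain B where B: "B \<in> P" "M \<in> B" using partition_onD1[OF P(1)] by blast
  have rest: "(P - {B}, restrict c (insert M A - B)) \<in> avoiding_partitions (insert M A - B)"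
    using avoiding_partitions_remove_block[OF x[unfolded x_eq] B(1)] .
  have "\<forall>a\<in>insert M A. a \<le> M" using assms(2) by auto
  then consider "B = {M}" | k where "k < M" "B = {k, M}"
    using avoiding_partitions_block_of_greatest[OF x[unfolded x_eq] B] by blast
  then show "x \<in> (\<Union>v\<in>{1, 2}. add_singleton M v ` avoiding_partitions A)
    \<union> (\<Union>k\<in>A. add_pair k M ` avoiding_partitions (A - {k}))"
  proof cases
    case 1
    then have "insert M A - B = A" using assms(1) by auto
    with rest have "(P - {B}, restrict c A) \<in> avoiding_partitions A" by simp
    moreover have "add_singleton M (c M) (P - {B}, restrict c A) = x"
      using 1 B(1) c_outside assms(1) by (auto simp: add_singleton_def x_eq fun_eq_iff)
    ultimately have "x \<in> add_singleton M (c M) ` avoiding_partitions A" by (metis image_eqI)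
    moreover have "c M \<in> {1, 2}" using P(2) by auto
    ultimately show ?thesis by blast
  next
    case (2 k)
    have k: "k \<in> A" using 2 B(1) partition_onD1[OF P(1)] by auto
    have "c k = 2" "c M = 1" using P(3)[OF B(1) _ B(2) \<open>k < M\<close>] 2 by auto
    then have "add_pair k M (P - {B}, restrict c (A - {k})) = x"
      using 2 B(1) c_outside by (auto simp: add_pair_def x_eq fun_eq_iff)
    moreover have "insert M A - B = A - {k}" using 2 assms(1) by auto
    ultimately have "x \<in> add_pair k M ` avoiding_partitions (A - {k})"
      using rest by (metis image_eqI)
    then show ?thesis using k by blast
  qed
qed

lemma avoiding_partitions_insert_greatest:
  assumes "M \<notin> A" "\<forall>a\<in>A. a < M"
  shows "avoiding_partitions (insert M A) =
    (\<Union>v\<in>{1, 2}. add_singleton M v ` avoiding_partitions A)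
    \<union> (\<Union>k\<in>A. add_pair k M ` avoiding_partitions (A - {k}))"
proof (rule equalityI[OF avoiding_partitions_insert_greatest_subset[OF assms]], rule subsetI)
  fix x assume "x \<in> (\<Union>v\<in>{1, 2}. add_singleton M v ` avoiding_partitions A)
    \<union> (\<Union>k\<in>A. add_pair k M ` avoiding_partitions (A - {k}))"
  then consider v y where "v \<in> {1, 2}" "y \<in> avoiding_partitions A" "x = add_singleton M v y"
    | k y where "k \<in> A" "y \<in> avoiding_partitions (A - {k})" "x = add_pair k M y"
    by blast
  then show "x \<in> avoiding_partitions (insert M A)"
  proof cases
    case 1
    then show ?thesis using add_singleton_mem[OF 1(2) assms(1) 1(1)] by simp
  next
    case (2 k y)
    have "A - {k} \<union> {k, M} = insert M A" using 2(1) by blast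
    moreover have "add_pair k M y \<in> avoiding_partitions (A - {k} \<union> {k, M})"
      using add_pair_mem[OF 2(2)] 2(1) assms by blast
    ultimately show ?thesis using 2(3) by simp
  qed
qed

lemma card_avoiding_partitions_insert_greatest:
  assumes "finite A" "M \<notin> A" "\<forall>a\<in>A. a < M"
    and "\<forall>k\<in>A. card (avoiding_partitions (A - {k})) = c"
  shows "card (avoiding_partitions (insert M A)) = 2 * card (avoiding_partitions A) + card A * c"
proof -
  let ?X = "\<lambda>v. add_singleton M v ` avoiding_partitions A"
  let ?Y = "\<lambda>k. add_pair k M ` avoiding_partitions (A - {k})"
  have "card (\<Union>v\<in>{1, 2}. ?X v) = 2 * card (avoiding_partitions A)"
  proof (subst card_UN_disjoint_const)
    show "card (?X v) = card (avoiding_partitions A)" for v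
      using inj_on_add_singleton[OF assms(2)] by (simp add: card_image)
    show "?X v \<inter> ?X w = {}" if "v \<noteq> w" for v w
      using add_singleton_images_disjoint[OF that] .
  qed (use assms(1) in \<open>auto simp: finite_avoiding_partitions\<close>)
  moreover have "card (\<Union>k\<in>A. ?Y k) = card A * c"
  proof (subst card_UN_disjoint_const)
    show "card (?Y k) = c" if "k \<in> A" for k
      using assms(2,4) that inj_on_add_pair[of k "A - {k}" M] by (simp add: card_image)
    show "?Y i \<inter> ?Y j = {}" if "i \<in> A" "j \<in> A" "i \<noteq> j" for i j
      using add_pair_images_disjoint[of M "A - {j}" i j] that assms(2) by auto
  qed (use assms(1) in \<open>auto simp: finite_avoiding_partitions\<close>)
  moreover have "?X v \<inter> ?Y k = {}" if "k \<in> A" for v k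
    using add_singleton_add_pair_images_disjoint[of M "A - {k}" k] that assms(2) by auto
  then have "(\<Union>v\<in>{1, 2}. ?X v) \<inter> (\<Union>k\<in>A. ?Y k) = {}" by blast
  moreover have "finite (\<Union>v\<in>{1, 2}. ?X v)" "finite (\<Union>k\<in>A. ?Y k)"
    using assms(1) by (auto simp: finite_avoiding_partitions)
  ultimately show ?thesis
    unfolding avoiding_partitions_insert_greatest[OF assms(2,3)] by (simp add: card_Un_disjoint)
qed

lemma card_avoiding_partitions:
  "finite A \<Longrightarrow> card (avoiding_partitions A) = avoider_number (Suc (card A))"
proof (induction "card A" arbitrary: A rule: less_induct)
  case less
  show ?case
  proof (cases "A = {}")
    case True
    then show ?thesis by (simp add: avoiding_partitions_empty)
  next
    case False
    define M where "M = Max A"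
    define A' where "A' = A - {M}"
    have M: "M \<in> A" "\<forall>a\<in>A'. a < M"
      using less.prems False by (auto simp: M_def A'_def order.not_eq_order_implies_strict)
    then have A: "A = insert M A'" "M \<notin> A'" "finite A'" using less.prems by (auto simp: A'_def)
    have IH: "card (avoiding_partitions B) = avoider_number (Suc (card B))" if "B \<subseteq> A'" for B
    proof -
      have "B \<subset> A" using that A(1,2) by blast
      then show ?thesis using less.hyps less.prems finite_subset psubset_card_mono by blast
    qed
    have "card (avoiding_partitions (A' - {k})) = avoider_number (card A')" if "k \<in> A'" for k
      using IH[of "A' - {k}"] that A(3) by (cases "card A'") auto
    then show ?thesis
      using card_avoiding_partitions_insert_greatest[OF A(3,2) M(2)] IH[of A'] A by simp
  qed
qed

theorem mainTheorem5:
  fixes n :: nat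
  shows "card (avoid_11_12 n) = card (S_12_3_214_3 (n + 1))"
proof -
  have "card (avoid_11_12 n) = avoider_number (Suc n)"
    using card_avoiding_partitions[of "{1..n}"] by (simp add: avoid_11_12_eq)
  also have "\<dots> = card (S_12_3_214_3 (n + 1))"
    using card_avoiders[of "{1..n + 1}"] by (simp add: S_12_3_214_3_eq_avoiders)
  finally show ?thesis .
qed

end
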